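(* For any $x,y \in B_E$, $$\beta_E(x,y)=\sup\{ |f(x)-f(y)| : f\in\mathcal B(B_E),\ \|f\|_{inv} \leq 1 \}.$$
   Context: $E$ is a complex Hilbert space of arbitrary dimension with inner product $\langle\cdot,\cdot\rangle$ and open unit ball $B_E$; fix an orthonormal basis and let $\overline z$ denote coordinatewise conjugation. For analytic $g$, $\nabla g(x)$ is defined by $g'(x)(y)=\langle y,\overline{\nabla g(x)}\rangle$. For $a\in B_E$, $\varphi_a(y)=(s_aQ_a+P_a)\big(\frac{a-y}{1-\langle y,a\rangle}\big)$ with $s_a=\sqrt{1-\|a\|^2}$, $P_a$ the orthogonal projection onto $\mathbb Ca$, $Q_a=I-P_a$ ($\varphi_0(y)=-y$). The Bloch space $\mathcal B(B_E)$ consists of analytic $f:B_E\to\mathbb C$ with $\sup_x(1-\|x\|^2)\|f'(x)\|<\infty$, and $\|f\|_{inv}=\sup_{x\in B_E}\|\nabla(f\circ\varphi_x)(0)\|$. $\rho_E(x,y)=\|\varphi_x(y)\|$ and $\beta_E(x,y)=\frac12\log\frac{1+\rho_E(x,y)}{1-\rho_E(x,y)}$. *)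

theory Defs
  imports "HOL-Analysis.Analysis"
begin

class chilbert = real_normed_vector + complete_space +
  fixes scaleC :: "complex \<Rightarrow> 'a \<Rightarrow> 'a"
    and cinner :: "'a \<Rightarrow> 'a \<Rightarrow> complex"
  assumes scaleR_scaleC: "scaleR r x = scaleC (complex_of_real r) x"
    and scaleC_add_right: "scaleC c (x + y) = scaleC c x + scaleC c y"
    and scaleC_add_left: "scaleC (c + d) x = scaleC c x + scaleC d x"
    and scaleC_scaleC: "scaleC c (scaleC d x) = scaleC (c * d) x"
    and scaleC_one: "scaleC 1 x = x"
    and norm_scaleC: "norm (scaleC c x) = cmod c * norm x"
    and cinner_add_left: "cinner (x + y) z = cinner x z + cinner y z"
    and cinner_scaleC_left: "cinner (scaleC c x) y = c * cinner x y"
    and cinner_commute: "cinner y x = cnj (cinner x y)"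
    and cinner_self_norm: "cinner x x = complex_of_real ((norm x)^2)"

definition hholo_on :: "('a::chilbert \<Rightarrow> complex) \<Rightarrow> 'a set \<Rightarrow> bool" where
  "hholo_on f U \<longleftrightarrow> open U \<and>
     (\<forall>x\<in>U. \<exists>L. (f has_derivative L) (at x) \<and> (\<forall>c v. L (scaleC c v) = c * L v))"

definition projP :: "'a::chilbert \<Rightarrow> 'a \<Rightarrow> 'a" where
  "projP a y = (if a = 0 then 0 else scaleC (cinner y a / cinner a a) a)"

definition phi :: "'a::chilbert \<Rightarrow> 'a \<Rightarrow> 'a" where
  "phi a y = (let z = scaleC (1 / (1 - cinner y a)) (a - y);
                  s = sqrt (1 - (norm a)^2)
              in scaleR s (z - projP a z) + projP a z)"

text \<open>Norm of the derivative f'(x) as a (bounded) functional; this equals the norm of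
the gradient, since coordinatewise conjugation is an isometry.\<close>
definition dnorm :: "('a::chilbert \<Rightarrow> complex) \<Rightarrow> 'a \<Rightarrow> real" where
  "dnorm f x = onorm (frechet_derivative f (at x))"

definition bloch :: "('a::chilbert \<Rightarrow> complex) set" where
  "bloch = {f. hholo_on f (ball 0 1) \<and>
               bdd_above ((\<lambda>x. (1 - (norm x)^2) * dnorm f x) ` ball 0 1)}"

text \<open>The invariant norm (possibly infinite, hence in ereal).\<close>
definition inv_norm :: "('a::chilbert \<Rightarrow> complex) \<Rightarrow> ereal" where
  "inv_norm f = (SUP x\<in>ball 0 1. ereal (dnorm (f \<circ> phi x) 0))"

definition rhoE :: "'a::chilbert \<Rightarrow> 'a \<Rightarrow> real" where
  "rhoE x y = norm (phi x y)"

definition betaE :: "'a::chilbert \<Rightarrow> 'a \<Rightarrow> real" where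
  "betaE x y = (1/2) * ln ((1 + rhoE x y) / (1 - rhoE x y))"

end

theory Submission
  imports Defs "HOL-Complex_Analysis.Complex_Analysis"
begin

text \<open>For \<open>\<le>\<close>: put \<open>\<rho> = |phi_x(y)|\<close> and \<open>v = phi_x(y) / \<rho>\<close>, and follow the geodesic
  \<open>\<sigma> \<mapsto> phi_x(tanh \<sigma> \<cdot> v)\<close> from \<open>x\<close> (\<open>\<sigma> = 0\<close>) to \<open>y\<close> (\<open>\<sigma> = artanh \<rho> = \<beta>(x,y)\<close>). If
  \<open>inv_norm f \<le> 1\<close>, the derivative of \<open>f\<close> along it is at most \<open>1\<close>: at the point
  \<open>q = phi_x(p)\<close>, \<open>p = tanh \<sigma> \<cdot> v\<close>, the invariant norm controls \<open>f'(q)\<close> after transport by the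
  automorphism \<open>phi_q\<close>, and Schwarz's lemma for the self-map \<open>phi_q \<circ> phi_x \<circ> phi_p\<close> of the
  ball, which fixes \<open>0\<close>, shows that this transport is compensated by the factor
  \<open>1 - tanh\<^sup>2 \<sigma>\<close> of the reparametrisation.

  For \<open>\<ge>\<close>: the supremum is attained by \<open>f = artanh \<langle>phi_x(\<cdot>), v\<rangle>\<close>. For any holomorphic
  \<open>h\<close> from the ball to the disc, \<open>artanh \<circ> h\<close> has invariant norm at most \<open>1\<close> by the
  Schwarz--Pick lemma, since \<open>|artanh'(c)| (1 - |c|\<^sup>2) \<le> 1\<close>.\<close>

section \<open>Algebra of complex Hilbert spaces\<close>

declare scaleC_one [simp]

lemma scaleC_zero_left [simp]: "scaleC 0 (x::'a::chilbert) = 0"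
  using scaleC_add_left[of 0 0 x] by simp

lemma scaleC_zero_right [simp]: "scaleC c (0::'a::chilbert) = 0"
  using scaleC_add_right[of c 0 0] by simp

lemma scaleC_minus_right: "scaleC c (- (x::'a::chilbert)) = - scaleC c x"
  using scaleC_add_right[of c "-x" x] by (simp add: eq_neg_iff_add_eq_0)

lemma scaleC_minus_left: "scaleC (- c) (x::'a::chilbert) = - scaleC c x"
  using scaleC_add_left[of "-c" c x] by (simp add: eq_neg_iff_add_eq_0)

lemma scaleC_diff_right: "scaleC c ((x::'a::chilbert) - y) = scaleC c x - scaleC c y"
  using scaleC_add_right[of c x "-y"] by (simp add: scaleC_minus_right)

lemma scaleC_diff_left: "scaleC (c - d) (x::'a::chilbert) = scaleC c x - scaleC d x"
  using scaleC_add_left[of c "-d" x] by (simp add: scaleC_minus_left)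

lemma scaleC_of_real: "scaleC (of_real r) (x::'a::chilbert) = r *\<^sub>R x"
  by (simp add: scaleR_scaleC)

lemma scaleC_scaleR: "scaleC c (r *\<^sub>R (x::'a::chilbert)) = r *\<^sub>R scaleC c x"
  by (simp add: scaleR_scaleC scaleC_scaleC mult.commute)

lemma scaleR_scaleC_eq: "r *\<^sub>R scaleC c (x::'a::chilbert) = scaleC (of_real r * c) x"
  by (simp add: scaleR_scaleC scaleC_scaleC)

lemma cinner_zero_left [simp]: "cinner 0 (y::'a::chilbert) = 0"
  using cinner_add_left[of 0 0 y] by simp

lemma cinner_minus_left: "cinner (- x) (y::'a::chilbert) = - cinner x y"
  using cinner_add_left[of "-x" x y] by (simp add: eq_neg_iff_add_eq_0)

lemma cinner_diff_left: "cinner (x - z) (y::'a::chilbert) = cinner x y - cinner z y"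
  using cinner_add_left[of x "-z" y] by (simp add: cinner_minus_left)

lemma cinner_add_right: "cinner x (y + (z::'a::chilbert)) = cinner x y + cinner x z"
  by (metis cinner_add_left cinner_commute complex_cnj_add)

lemma cinner_scaleC_right: "cinner x (scaleC c (y::'a::chilbert)) = cnj c * cinner x y"
  by (metis cinner_commute cinner_scaleC_left complex_cnj_mult)

lemma cinner_zero_right [simp]: "cinner x (0::'a::chilbert) = 0"
  by (metis cinner_commute cinner_zero_left complex_cnj_zero)

lemma cinner_diff_right: "cinner x (y - (z::'a::chilbert)) = cinner x y - cinner x z"
  by (metis cinner_commute cinner_diff_left complex_cnj_diff)

lemma cinner_scaleR_left: "cinner (r *\<^sub>R x) (y::'a::chilbert) = of_real r * cinner x y"
  by (simp add: scaleR_scaleC cinner_scaleC_left)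

lemma cinner_scaleR_right: "cinner x (r *\<^sub>R (y::'a::chilbert)) = of_real r * cinner x y"
  by (simp add: scaleR_scaleC cinner_scaleC_right)

lemma norm_power2_eq_Re_cinner: "(norm (x::'a::chilbert))\<^sup>2 = Re (cinner x x)"
  by (simp add: cinner_self_norm)

lemma norm_cinner_le: "cmod (cinner (x::'a::chilbert) y) \<le> norm x * norm y"
proof (cases "y = 0")
  case True
  then show ?thesis by simp
next
  case False
  define Y where "Y = (norm y)\<^sup>2"
  have Y: "Y > 0" using False by (simp add: Y_def)
  define m where "m = cinner x y"
  define t where "t = m / of_real Y"
  have yy: "cinner y y = of_real Y" by (simp add: Y_def cinner_self_norm)
  have yx: "cinner y x = cnj m" by (simp add: m_def cinner_commute[of y x])
  have "cinner (x - scaleC t y) (x - scaleC t y)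
      = cinner x x - cnj t * m - t * cnj m + t * cnj t * of_real Y"
    by (simp add: cinner_diff_left cinner_diff_right cinner_scaleC_left cinner_scaleC_right
        yy yx m_def algebra_simps)
  also have "\<dots> = cinner x x - of_real ((cmod m)\<^sup>2 / Y)"
    using Y by (simp add: t_def field_simps) (simp add: complex_norm_square[symmetric])
  finally have "Re (cinner (x - scaleC t y) (x - scaleC t y)) = (norm x)\<^sup>2 - (cmod m)\<^sup>2 / Y"
    by (simp add: norm_power2_eq_Re_cinner)
  moreover have "Re (cinner (x - scaleC t y) (x - scaleC t y)) \<ge> 0"
    by (simp add: norm_power2_eq_Re_cinner[symmetric])
  ultimately have "(cmod m)\<^sup>2 / Y \<le> (norm x)\<^sup>2" by simp
  then have "(cmod m)\<^sup>2 \<le> (norm x * norm y)\<^sup>2"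
    using Y by (simp add: Y_def field_simps power_mult_distrib)
  then show ?thesis unfolding m_def by (rule power2_le_imp_le) simp
qed

lemma cinner_ne_1_ball:
  fixes x y :: "'a::chilbert"
  assumes "norm x < 1" "norm y < 1"
  shows "cinner x y \<noteq> 1"
proof
  assume "cinner x y = 1"
  then have "1 \<le> norm x * norm y" using norm_cinner_le[of x y] by simp
  moreover have "norm x * norm y \<le> norm x"
    using assms by (simp add: mult_left_le)
  ultimately show False using assms by simp
qed

lemma bounded_linear_cinner_left: "bounded_linear (\<lambda>x::'a::chilbert. cinner x a)"
proof (rule bounded_linear_intro[where K="norm a"])
  show "cinner (x + y) a = cinner x a + cinner y a" for x y by (rule cinner_add_left)
  show "cinner (r *\<^sub>R x) a = r *\<^sub>R cinner x a" for r x
    by (simp add: cinner_scaleR_left scaleR_conv_of_real)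
  show "norm (cinner x a) \<le> norm x * norm a" for x by (rule norm_cinner_le)
qed

lemma bounded_bilinear_scaleC: "bounded_bilinear (\<lambda>c (x::'a::chilbert). scaleC c x)"
proof (rule bounded_bilinear.intro)
  show "scaleC (a + a') b = scaleC a b + scaleC a' b" for a a' b by (rule scaleC_add_left)
  show "scaleC a (b + b') = scaleC a b + scaleC a b'" for a b b' by (rule scaleC_add_right)
  show "scaleC (r *\<^sub>R a) b = r *\<^sub>R scaleC a b" for r a b
    by (simp add: scaleR_conv_of_real scaleR_scaleC_eq)
  show "scaleC a (r *\<^sub>R b) = r *\<^sub>R scaleC a b" for r a b by (rule scaleC_scaleR)
  show "\<exists>K. \<forall>a b. norm (scaleC a (b::'a)) \<le> norm a * norm b * K"
    by (rule exI[of _ 1]) (simp add: norm_scaleC)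
qed

lemma bounded_linear_scaleC_left: "bounded_linear (\<lambda>c. scaleC c (v::'a::chilbert))"
  by (rule bounded_bilinear.bounded_linear_left[OF bounded_bilinear_scaleC])

lemma orthogonal_decomposition:
  fixes a y :: "'a::chilbert"
  assumes "a \<noteq> 0"
  obtains \<alpha> u where "y = scaleC \<alpha> a + u" "cinner u a = 0" "cinner y a = \<alpha> * of_real ((norm a)\<^sup>2)"
proof -
  define \<alpha> where "\<alpha> = cinner y a / of_real ((norm a)\<^sup>2)"
  define u where "u = y - scaleC \<alpha> a"
  have "cinner u a = 0" using assms
    by (simp add: u_def \<alpha>_def cinner_diff_left cinner_scaleC_left cinner_self_norm)
  moreover have "cinner y a = \<alpha> * of_real ((norm a)\<^sup>2)" using assms by (simp add: \<alpha>_def)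
  ultimately show ?thesis using that[of \<alpha> u] by (simp add: u_def)
qed

lemma norm_power2_orthogonal_sum:
  fixes a u :: "'a::chilbert"
  assumes u: "cinner u a = 0"
  shows "(norm (scaleC \<alpha> a + u))\<^sup>2 = (cmod \<alpha>)\<^sup>2 * (norm a)\<^sup>2 + (norm u)\<^sup>2"
proof -
  have ua: "cinner a u = 0" using u by (metis cinner_commute complex_cnj_zero)
  have "cinner (scaleC \<alpha> a + u) (scaleC \<alpha> a + u) = \<alpha> * cnj \<alpha> * cinner a a + cinner u u"
    by (simp add: cinner_add_left cinner_add_right cinner_scaleC_left cinner_scaleC_right u ua)
  then have "Re (cinner (scaleC \<alpha> a + u) (scaleC \<alpha> a + u)) = (cmod \<alpha>)\<^sup>2 * (norm a)\<^sup>2 + (norm u)\<^sup>2"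
    by (simp add: cinner_self_norm complex_norm_square[symmetric])
  then show ?thesis by (simp add: norm_power2_eq_Re_cinner)
qed

section \<open>The automorphisms \<open>phi a\<close> of the unit ball\<close>

definition moebius_quot :: "'a::chilbert \<Rightarrow> 'a \<Rightarrow> 'a" where
  "moebius_quot a y = scaleC (1 / (1 - cinner y a)) (a - y)"

definition moebius_lin :: "'a::chilbert \<Rightarrow> 'a \<Rightarrow> 'a" where
  "moebius_lin a z = sqrt (1 - (norm a)\<^sup>2) *\<^sub>R (z - projP a z) + projP a z"

lemma phi_eq_moebius_lin: "phi a y = moebius_lin a (moebius_quot a y)"
  by (simp add: phi_def moebius_quot_def moebius_lin_def Let_def)

lemma projP_eq: "(a::'a::chilbert) \<noteq> 0 \<Longrightarrow> projP a z = scaleC (cinner z a / of_real ((norm a)\<^sup>2)) a"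
  by (simp add: projP_def cinner_self_norm)

lemma bounded_linear_projP: "bounded_linear (projP (a::'a::chilbert))"
proof (cases "a = 0")
  case True
  then have "projP a = (\<lambda>z. 0)" by (simp add: fun_eq_iff projP_def)
  then show ?thesis by (simp add: bounded_linear_zero)
next
  case False
  then have "projP a = (\<lambda>z. scaleC (cinner z a / of_real ((norm a)\<^sup>2)) a)"
    by (simp add: fun_eq_iff projP_eq)
  then show ?thesis
    by (simp add: bounded_linear_compose[OF bounded_linear_scaleC_left
          bounded_linear_compose[OF bounded_linear_divide bounded_linear_cinner_left]])
qed

lemma projP_scaleC: "projP (a::'a::chilbert) (scaleC c z) = scaleC c (projP a z)"
  by (cases "a = 0") (simp_all add: projP_def cinner_scaleC_left scaleC_scaleC)

lemma bounded_linear_moebius_lin: "bounded_linear (moebius_lin (a::'a::chilbert))"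
  unfolding moebius_lin_def[abs_def]
  by (intro bounded_linear_add bounded_linear_projP bounded_linear_compose[OF bounded_linear_scaleR_right]
      bounded_linear_sub bounded_linear_ident)

lemma moebius_lin_scaleC: "moebius_lin (a::'a::chilbert) (scaleC c z) = scaleC c (moebius_lin a z)"
  by (simp add: moebius_lin_def projP_scaleC scaleC_add_right scaleC_diff_right scaleC_scaleR)

lemma phi_orthogonal_coords:
  fixes a u :: "'a::chilbert"
  assumes a: "a \<noteq> 0" and u: "cinner u a = 0" and D: "1 - \<alpha> * of_real ((norm a)\<^sup>2) \<noteq> 0"
  shows "phi a (scaleC \<alpha> a + u) =
    scaleC ((1 - \<alpha>) / (1 - \<alpha> * of_real ((norm a)\<^sup>2))) a
    + scaleC (- of_real (sqrt (1 - (norm a)\<^sup>2)) / (1 - \<alpha> * of_real ((norm a)\<^sup>2))) u"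
proof -
  define D where "D = 1 - \<alpha> * of_real ((norm a)\<^sup>2)"
  define s where "s = sqrt (1 - (norm a)\<^sup>2)"
  have ci: "cinner (scaleC \<alpha> a + u) a = \<alpha> * of_real ((norm a)\<^sup>2)"
    by (simp add: cinner_add_left cinner_scaleC_left cinner_self_norm u)
  have e: "a - (scaleC \<alpha> a + u) = scaleC (1 - \<alpha>) a - u"
    by (simp add: scaleC_diff_left)
  have Z: "moebius_quot a (scaleC \<alpha> a + u) = scaleC ((1 - \<alpha>) / D) a - scaleC (1 / D) u"
    unfolding moebius_quot_def ci e by (simp add: D_def scaleC_diff_right scaleC_scaleC)
  have P: "projP a (moebius_quot a (scaleC \<alpha> a + u)) = scaleC ((1 - \<alpha>) / D) a"
    using a by (simp add: Z projP_eq cinner_diff_left cinner_scaleC_left u cinner_self_norm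
        del: of_real_power)
  have "phi a (scaleC \<alpha> a + u) = s *\<^sub>R (- scaleC (1 / D) u) + scaleC ((1 - \<alpha>) / D) a"
    by (simp add: phi_eq_moebius_lin moebius_lin_def s_def P) (simp add: Z)
  also have "s *\<^sub>R (- scaleC (1 / D) u) = scaleC (- of_real s / D) u"
    by (simp add: scaleR_scaleC scaleC_scaleC scaleC_minus_right scaleC_minus_left[symmetric])
  finally show ?thesis by (simp add: D_def s_def add.commute)
qed

lemma phi_zero_left: "phi 0 y = - (y::'a::chilbert)"
  by (simp add: phi_eq_moebius_lin moebius_lin_def moebius_quot_def projP_def)

lemma phi_zero_right: "phi a 0 = (a::'a::chilbert)"
proof (cases "a = 0")
  case True
  then show ?thesis by (simp add: phi_zero_left)
next
  case False
  then have "projP a a = a" by (simp add: projP_eq cinner_self_norm)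
  then show ?thesis by (simp add: phi_eq_moebius_lin moebius_quot_def moebius_lin_def)
qed

lemma phi_self: "phi a a = (0::'a::chilbert)"
  using linear_0[OF bounded_linear.linear[OF bounded_linear_projP[of a]]]
  by (simp add: phi_eq_moebius_lin moebius_quot_def moebius_lin_def)

lemma phi_involutive:
  fixes a y :: "'a::chilbert"
  assumes na: "norm a < 1" and ya: "cinner y a \<noteq> 1"
  shows "phi a (phi a y) = y"
proof (cases "a = 0")
  case True
  then show ?thesis by (simp add: phi_zero_left)
next
  case a: False
  obtain \<alpha> u where y: "y = scaleC \<alpha> a + u" and u: "cinner u a = 0"
    and ci: "cinner y a = \<alpha> * of_real ((norm a)\<^sup>2)"
    using orthogonal_decomposition[OF a] by blast
  define A where "A = (of_real ((norm a)\<^sup>2) :: complex)"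
  define s where "s = (of_real (sqrt (1 - (norm a)\<^sup>2)) :: complex)"
  define D where "D = 1 - \<alpha> * A"
  have D: "D \<noteq> 0" using ya ci by (simp add: D_def A_def)
  have a2: "(norm a)\<^sup>2 < 1" using na by (simp add: abs_square_less_1)
  then have A1: "1 - A \<noteq> 0" by (simp add: A_def complex_eq_iff)
  have ss: "s * s = 1 - A"
    using a2 by (simp add: s_def A_def flip: of_real_mult)
  have p1: "phi a y = scaleC ((1 - \<alpha>) / D) a + scaleC (- s / D) u"
    using phi_orthogonal_coords[OF a u] D unfolding y by (simp add: D_def A_def s_def)
  have u': "cinner (scaleC (- s / D) u) a = 0" by (simp add: cinner_scaleC_left u)
  have D': "1 - ((1 - \<alpha>) / D) * A = (1 - A) / D" using D by (simp add: D_def field_simps)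
  then have D'0: "1 - ((1 - \<alpha>) / D) * of_real ((norm a)\<^sup>2) \<noteq> 0"
    using D A1 by (simp add: A_def)
  have "phi a (phi a y) = scaleC ((1 - ((1 - \<alpha>) / D)) / ((1 - A) / D)) a
        + scaleC (- s / ((1 - A) / D)) (scaleC (- s / D) u)"
    unfolding p1 using phi_orthogonal_coords[OF a u' D'0] D' by (simp add: A_def s_def)
  also have "(1 - ((1 - \<alpha>) / D)) / ((1 - A) / D) = \<alpha>"
  proof -
    have "1 - (1 - \<alpha>) / D = \<alpha> * (1 - A) / D" using D by (simp add: D_def field_simps)
    then show ?thesis using D A1 by simp
  qed
  also have "scaleC (- s / ((1 - A) / D)) (scaleC (- s / D) u) = u"
  proof -
    have "(- s / ((1 - A) / D)) * (- s / D) = 1" using D A1 ss by (simp add: field_simps)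
    then show ?thesis by (simp add: scaleC_scaleC)
  qed
  finally show ?thesis using y by simp
qed

lemma norm_phi_less_1:
  fixes a y :: "'a::chilbert"
  assumes na: "norm a < 1" and ny: "norm y < 1"
  shows "norm (phi a y) < 1"
proof (cases "a = 0")
  case True
  then show ?thesis using ny by (simp add: phi_zero_left)
next
  case a: False
  obtain \<alpha> u where y: "y = scaleC \<alpha> a + u" and u: "cinner u a = 0"
    and ci: "cinner y a = \<alpha> * of_real ((norm a)\<^sup>2)"
    using orthogonal_decomposition[OF a] by blast
  define A where "A = (norm a)\<^sup>2"
  define D where "D = 1 - \<alpha> * of_real A"
  have A0: "0 < A" "A < 1" using a na by (simp_all add: A_def power_less_one_iff)
  have D: "D \<noteq> 0" using cinner_ne_1_ball[OF ny na] ci by (simp add: D_def A_def)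
  have "(norm y)\<^sup>2 < 1" using ny by (simp add: abs_square_less_1)
  then have yn: "(cmod \<alpha>)\<^sup>2 * A + (norm u)\<^sup>2 < 1"
    using norm_power2_orthogonal_sum[OF u, of \<alpha>] y by (simp add: A_def)
  have p1: "phi a y = scaleC ((1 - \<alpha>) / D) a + scaleC (- of_real (sqrt (1 - A)) / D) u"
    using phi_orthogonal_coords[OF a u] D unfolding y by (simp add: D_def A_def)
  have u': "cinner (scaleC (- of_real (sqrt (1 - A)) / D) u) a = 0"
    by (simp add: cinner_scaleC_left u)
  have D2: "(cmod D)\<^sup>2 = (cmod (1 - \<alpha>))\<^sup>2 * A + (1 - A) * (1 - (cmod \<alpha>)\<^sup>2 * A)"
    unfolding D_def by (simp only: cmod_power2) (simp add: power2_eq_square algebra_simps)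
  have "(norm (phi a y))\<^sup>2 = ((cmod (1 - \<alpha>))\<^sup>2 * A + (1 - A) * (norm u)\<^sup>2) / (cmod D)\<^sup>2"
    unfolding p1 norm_power2_orthogonal_sum[OF u'] using A0 D
    by (simp add: norm_scaleC A_def norm_divide power_divide power_mult_distrib add_divide_distrib)
  also have "\<dots> < 1"
  proof -
    have "(1 - A) * (norm u)\<^sup>2 < (1 - A) * (1 - (cmod \<alpha>)\<^sup>2 * A)"
      using A0 yn by (intro mult_strict_left_mono) auto
    then have "(cmod (1 - \<alpha>))\<^sup>2 * A + (1 - A) * (norm u)\<^sup>2 < (cmod D)\<^sup>2"
      unfolding D2 by simp
    then show ?thesis using D by simp
  qed
  finally show ?thesis by (simp add: abs_square_less_1)
qed

section \<open>Complex Frechet derivatives\<close>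

definition has_cderiv_map :: "('a::chilbert \<Rightarrow> 'b::chilbert) \<Rightarrow> ('a \<Rightarrow> 'b) \<Rightarrow> 'a \<Rightarrow> bool" where
  "has_cderiv_map F L x \<longleftrightarrow> (F has_derivative L) (at x) \<and> (\<forall>c v. L (scaleC c v) = scaleC c (L v))"

definition has_cderiv :: "('a::chilbert \<Rightarrow> complex) \<Rightarrow> ('a \<Rightarrow> complex) \<Rightarrow> 'a \<Rightarrow> bool" where
  "has_cderiv g G x \<longleftrightarrow> (g has_derivative G) (at x) \<and> (\<forall>c v. G (scaleC c v) = c * G v)"

lemma hholo_on_iff_has_cderiv: "hholo_on f U \<longleftrightarrow> open U \<and> (\<forall>x\<in>U. \<exists>G. has_cderiv f G x)"
  by (auto simp: hholo_on_def has_cderiv_def)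

lemma has_cderiv_map_linear: "has_cderiv_map F L x \<Longrightarrow> linear L"
  unfolding has_cderiv_map_def using has_derivative_linear by blast

lemma has_cderiv_linear: "has_cderiv g G x \<Longrightarrow> bounded_linear G"
  unfolding has_cderiv_def using has_derivative_bounded_linear by blast

lemma dnorm_eq_onorm: "has_cderiv g G x \<Longrightarrow> dnorm g x = onorm G"
  unfolding has_cderiv_def dnorm_def by (metis frechet_derivative_at)

lemma has_cderiv_map_compose:
  assumes "has_cderiv_map F L x" "has_cderiv_map H K (F x)"
  shows "has_cderiv_map (\<lambda>z. H (F z)) (\<lambda>h. K (L h)) x"
  using assms unfolding has_cderiv_map_def by (auto intro: has_derivative_compose)

lemma has_cderiv_compose:
  assumes "has_cderiv_map F L x" "has_cderiv g G (F x)"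
  shows "has_cderiv (\<lambda>z. g (F z)) (\<lambda>h. G (L h)) x"
  using assms unfolding has_cderiv_map_def has_cderiv_def by (auto intro: has_derivative_compose)

lemma has_cderiv_cinner:
  assumes "has_cderiv_map F L x"
  shows "has_cderiv (\<lambda>z. cinner (F z) u) (\<lambda>h. cinner (L h) u) x"
  using assms unfolding has_cderiv_map_def has_cderiv_def
  by (auto simp: cinner_scaleC_left intro: bounded_linear.has_derivative[OF bounded_linear_cinner_left])

lemma has_cderiv_field_compose:
  assumes "has_cderiv g G x" "(T has_field_derivative D) (at (g x))"
  shows "has_cderiv (\<lambda>z. T (g z)) (\<lambda>h. D * G h) x"
  using assms unfolding has_cderiv_def has_field_derivative_def
  by (auto intro: has_derivative_compose)

lemma has_cderiv_restrict_line:
  fixes g :: "'a::chilbert \<Rightarrow> complex"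
  assumes "has_cderiv g G (z0 + scaleC l w)"
  shows "((\<lambda>m. g (z0 + scaleC m w)) has_field_derivative G w) (at l)"
proof -
  have "((\<lambda>m. z0 + scaleC m w) has_derivative (\<lambda>h. 0 + scaleC h w)) (at l)"
    by (intro has_derivative_add has_derivative_const
        bounded_linear.has_derivative[OF bounded_linear_scaleC_left has_derivative_ident])
  then have "((\<lambda>m. g (z0 + scaleC m w)) has_derivative (\<lambda>h. h * G w)) (at l)"
    using has_derivative_compose assms unfolding has_cderiv_def by fastforce
  then show ?thesis unfolding has_field_derivative_def
    by (rule has_derivative_eq_rhs) (simp add: fun_eq_iff mult.commute)
qed

definition moebius_quot_deriv :: "'a::chilbert \<Rightarrow> 'a \<Rightarrow> 'a \<Rightarrow> 'a" where
  "moebius_quot_deriv a y h =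
     scaleC (1 / (1 - cinner y a)) (- h) + scaleC (cinner h a / (1 - cinner y a)\<^sup>2) (a - y)"

definition phi_deriv :: "'a::chilbert \<Rightarrow> 'a \<Rightarrow> 'a \<Rightarrow> 'a" where
  "phi_deriv a y h = moebius_lin a (moebius_quot_deriv a y h)"

lemma moebius_quot_has_derivative:
  fixes a y :: "'a::chilbert"
  assumes ya: "cinner y a \<noteq> 1"
  shows "(moebius_quot a has_derivative moebius_quot_deriv a y) (at y)"
proof -
  have c: "((\<lambda>y. cinner y a) has_derivative (\<lambda>h. cinner h a)) (at y)"
    by (rule bounded_linear.has_derivative[OF bounded_linear_cinner_left has_derivative_ident])
  have inv: "((\<lambda>w. 1 / (1 - w)) has_field_derivative (1 / (1 - cinner y a)\<^sup>2)) (at (cinner y a))"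
    using ya by (auto intro!: derivative_eq_intros simp: field_simps power2_eq_square)
  have q: "((\<lambda>y. 1 / (1 - cinner y a)) has_derivative
      (\<lambda>h. (1 / (1 - cinner y a)\<^sup>2) * cinner h a)) (at y)"
    using has_derivative_compose[OF c inv[unfolded has_field_derivative_def]] by simp
  have d: "((\<lambda>y. a - y) has_derivative (\<lambda>h. 0 - h)) (at y)"
    by (intro has_derivative_diff has_derivative_const has_derivative_ident)
  have "moebius_quot a = (\<lambda>y. scaleC (1 / (1 - cinner y a)) (a - y))"
    by (simp add: fun_eq_iff moebius_quot_def)
  then show ?thesis
    using bounded_bilinear.FDERIV[OF bounded_bilinear_scaleC q d]
    by (simp add: moebius_quot_deriv_def[abs_def] mult.commute)
qed

lemma moebius_quot_deriv_scaleC: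
  "moebius_quot_deriv a y (scaleC c h) = scaleC c (moebius_quot_deriv a y (h::'a::chilbert))"
  by (simp add: moebius_quot_deriv_def scaleC_add_right scaleC_diff_right scaleC_minus_right scaleC_scaleC
      cinner_scaleC_left mult.commute)

lemma phi_has_cderiv_map:
  fixes a y :: "'a::chilbert"
  assumes "cinner y a \<noteq> 1"
  shows "has_cderiv_map (phi a) (phi_deriv a y) y"
proof -
  have "phi a = (\<lambda>y. moebius_lin a (moebius_quot a y))" by (simp add: fun_eq_iff phi_eq_moebius_lin)
  then show ?thesis
    using bounded_linear.has_derivative[OF bounded_linear_moebius_lin moebius_quot_has_derivative[OF assms]]
    by (simp add: has_cderiv_map_def phi_deriv_def[abs_def] moebius_quot_deriv_scaleC moebius_lin_scaleC)
qed

lemma phi_has_cderiv_map_ball: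
  fixes a y :: "'a::chilbert"
  assumes "norm a < 1" "norm y < 1"
  shows "has_cderiv_map (phi a) (phi_deriv a y) y"
  using phi_has_cderiv_map cinner_ne_1_ball assms by blast

lemma hholo_on_compose_phi:
  fixes h :: "'a::chilbert \<Rightarrow> complex"
  assumes h: "hholo_on h (ball 0 1)" and a: "norm a < 1"
  shows "hholo_on (h \<circ> phi a) (ball 0 1)"
  unfolding hholo_on_iff_has_cderiv
proof (intro conjI ballI)
  fix y :: 'a assume "y \<in> ball 0 1"
  then have y: "norm y < 1" by simp
  have "phi a y \<in> ball 0 1" using norm_phi_less_1[OF a y] by simp
  then obtain G where "has_cderiv h G (phi a y)"
    using h unfolding hholo_on_iff_has_cderiv by blast
  then show "\<exists>G. has_cderiv (h \<circ> phi a) G y"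
    using has_cderiv_compose[OF phi_has_cderiv_map_ball[OF a y]] by (auto simp: comp_def)
qed simp

lemma phi_deriv_inverse:
  fixes q k :: "'a::chilbert"
  assumes q: "norm q < 1"
  shows "phi_deriv q 0 (phi_deriv q q k) = k"
proof -
  have "has_cderiv_map (phi q) (phi_deriv q 0) (phi q q)"
    unfolding phi_self by (rule phi_has_cderiv_map) simp
  then have "((\<lambda>z. phi q (phi q z)) has_derivative (\<lambda>h. phi_deriv q 0 (phi_deriv q q h))) (at q)"
    using has_cderiv_map_compose[OF phi_has_cderiv_map_ball[OF q q]] unfolding has_cderiv_map_def
    by blast
  then have "((\<lambda>z. z) has_derivative (\<lambda>h. phi_deriv q 0 (phi_deriv q q h))) (at q)"
  proof (rule has_derivative_transform_within_open[where s="ball 0 1"])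
    show "phi q (phi q z) = z" if "z \<in> ball 0 1" for z
      using that q by (intro phi_involutive cinner_ne_1_ball) auto
  qed (use q in auto)
  then have "(\<lambda>h. phi_deriv q 0 (phi_deriv q q h)) = (\<lambda>h. h)"
    using has_derivative_unique has_derivative_ident by blast
  then show ?thesis by metis
qed

lemma phi_deriv_radial:
  fixes v :: "'a::chilbert"
  assumes v: "norm v = 1"
  shows "phi_deriv (t *\<^sub>R v) 0 v = (- (1 - t\<^sup>2)) *\<^sub>R v"
proof -
  have vv: "cinner v v = 1" using v by (simp add: cinner_self_norm)
  have z: "moebius_quot_deriv (t *\<^sub>R v) 0 v = (- (1 - t\<^sup>2)) *\<^sub>R v"
    by (simp add: moebius_quot_deriv_def cinner_scaleR_right vv scaleC_of_real power2_eq_square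
        algebra_simps)
  have L: "moebius_lin (t *\<^sub>R v) v = v"
  proof (cases "t = 0")
    case True
    then show ?thesis by (simp add: moebius_lin_def projP_def)
  next
    case False
    then have "t *\<^sub>R v \<noteq> 0" using v by auto
    then have "projP (t *\<^sub>R v) v = v"
      using False v by (simp add: projP_eq cinner_scaleR_right vv power2_eq_square scaleC_scaleR
          scaleR_scaleC_eq)
    then show ?thesis by (simp add: moebius_lin_def)
  qed
  have "moebius_lin (t *\<^sub>R v) ((- (1 - t\<^sup>2)) *\<^sub>R v) = (- (1 - t\<^sup>2)) *\<^sub>R moebius_lin (t *\<^sub>R v) v"
    by (rule linear_scale[OF bounded_linear.linear[OF bounded_linear_moebius_lin]])
  then show ?thesis by (simp add: phi_deriv_def z L)
qed

section \<open>Schwarz--Pick estimates\<close>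

lemma Moebius_function_has_field_derivative:
  assumes "1 - cnj w * z \<noteq> 0"
  shows "(Moebius_function 0 w has_field_derivative (1 - cnj w * w) / (1 - cnj w * z)\<^sup>2) (at z)"
  unfolding Moebius_function_simple[abs_def] using assms
  by (auto intro!: derivative_eq_intros simp: field_simps power2_eq_square)

lemma Moebius_function_has_field_derivative_at_center:
  assumes "norm w < 1"
  shows "(Moebius_function 0 w has_field_derivative complex_of_real (1 / (1 - (norm w)\<^sup>2))) (at w)"
proof -
  have wc: "cnj w * w = of_real ((norm w)\<^sup>2)"
    by (simp only: complex_norm_square mult.commute)
  have "(norm w)\<^sup>2 < 1" using assms by (simp add: abs_square_less_1)
  then have nz: "1 - cnj w * w \<noteq> 0"
    unfolding wc by (metis less_irrefl of_real_1 of_real_eq_iff right_minus_eq)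
  have "(1 - cnj w * w) / (1 - cnj w * w)\<^sup>2 = 1 / (1 - cnj w * w)"
    using nz by (simp add: power2_eq_square)
  then show ?thesis using Moebius_function_has_field_derivative[OF nz] by (simp add: wc)
qed

lemma schwarz_pick_deriv_0:
  fixes f :: "complex \<Rightarrow> complex"
  assumes holf: "f holomorphic_on ball 0 1" and into: "f ` ball 0 1 \<subseteq> ball 0 1"
  shows "norm (deriv f 0) \<le> 1 - (norm (f 0))\<^sup>2"
proof -
  define c where "c = f 0"
  have "f 0 \<in> ball 0 1" using into by (meson centre_in_ball image_subset_iff zero_less_one)
  then have c: "norm c < 1" by (simp add: c_def)
  then have c2: "(norm c)\<^sup>2 < 1" by (simp add: abs_square_less_1)
  define k where "k = Moebius_function 0 c \<circ> f"
  have holk: "k holomorphic_on ball 0 1"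
    unfolding k_def by (rule holomorphic_on_compose_gen[OF holf Moebius_function_holomorphic[OF c] into])
  have "norm (deriv k 0) \<le> 1"
  proof (rule Schwarz_Lemma(2)[OF holk, where \<xi> = 0])
    show "k 0 = 0" by (simp add: k_def c_def Moebius_function_eq_zero)
    show "norm (k z) < 1" if "norm z < 1" for z
      using into that by (auto simp: k_def image_subset_iff intro!: Moebius_function_norm_lt_1[OF c])
  qed simp
  moreover have "(k has_field_derivative of_real (1 / (1 - (norm c)\<^sup>2)) * deriv f 0) (at 0)"
    using DERIV_chain[OF Moebius_function_has_field_derivative_at_center[OF c, unfolded c_def]
        holomorphic_derivI[OF holf open_ball centre_in_ball[THEN iffD2, OF zero_less_one]]]
    by (simp add: k_def c_def)
  then have "norm (deriv k 0) = \<bar>1 / (1 - (norm c)\<^sup>2)\<bar> * norm (deriv f 0)"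
    by (simp only: DERIV_imp_deriv norm_mult norm_of_real)
  ultimately have "norm (deriv f 0) / (1 - (norm c)\<^sup>2) \<le> 1"
    using c2 by simp
  then show ?thesis using c2 by (simp add: c_def field_simps)
qed

lemma schwarz_pick_has_cderiv:
  fixes g :: "'a::chilbert \<Rightarrow> complex"
  assumes r: "r > 0" and hol: "hholo_on g (ball z0 r)" and into: "g ` ball z0 r \<subseteq> ball 0 1"
    and G: "has_cderiv g G z0"
  shows "cmod (G e) * r \<le> (1 - (cmod (g z0))\<^sup>2) * norm e"
proof (cases "e = 0")
  case True
  then show ?thesis using linear_0[OF bounded_linear.linear[OF has_cderiv_linear[OF G]]] by simp
next
  case False
  define e1 where "e1 = scaleC (of_real (r / norm e)) e"
  define k where "k = (\<lambda>l. g (z0 + scaleC l e1))"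
  have inball: "z0 + scaleC l e1 \<in> ball z0 r" if "cmod l < 1" for l
    using that r False by (simp add: dist_norm e1_def norm_scaleC norm_divide)
  have "k holomorphic_on ball 0 1"
    unfolding holomorphic_on_def
  proof
    fix l :: complex assume "l \<in> ball 0 1"
    then obtain G' where "has_cderiv g G' (z0 + scaleC l e1)"
      using hol inball unfolding hholo_on_iff_has_cderiv by fastforce
    then show "k field_differentiable at l within ball 0 1"
      unfolding k_def field_differentiable_def
      by (blast intro: has_cderiv_restrict_line has_field_derivative_at_within)
  qed
  moreover have "k ` ball 0 1 \<subseteq> ball 0 1" using into inball by (auto simp: k_def)
  ultimately have "norm (deriv k 0) \<le> 1 - (cmod (g z0))\<^sup>2"
    using schwarz_pick_deriv_0 by (fastforce simp: k_def)
  moreover have "deriv k 0 = G e1"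
    using has_cderiv_restrict_line[of g G z0 0 e1] G by (simp add: k_def DERIV_imp_deriv)
  moreover have "G e1 = of_real (r / norm e) * G e"
    using G by (simp add: has_cderiv_def e1_def)
  ultimately have "(r / norm e) * cmod (G e) \<le> 1 - (cmod (g z0))\<^sup>2"
    using r by (simp add: norm_mult norm_divide)
  then show ?thesis using False r by (simp add: field_simps)
qed

lemma schwarz_has_cderiv_map:
  fixes \<Theta> :: "'a::chilbert \<Rightarrow> 'a"
  assumes hol: "\<And>z. z \<in> ball 0 1 \<Longrightarrow> \<exists>L. has_cderiv_map \<Theta> L z"
    and into: "\<And>z. z \<in> ball 0 1 \<Longrightarrow> norm (\<Theta> z) < 1"
    and \<Theta>0: "\<Theta> 0 = 0"
    and L0: "has_cderiv_map \<Theta> L0 0"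
  shows "norm (L0 v) \<le> norm v"
proof (cases "L0 v = 0")
  case True
  then show ?thesis by simp
next
  case False
  define u where "u = scaleC (of_real (1 / norm (L0 v))) (L0 v)"
  have nu: "norm u = 1" using False by (simp add: u_def norm_scaleC norm_divide)
  define g where "g = (\<lambda>z. cinner (\<Theta> z) u)"
  have "cmod (cinner (L0 v) u) * 1 \<le> (1 - (cmod (g 0))\<^sup>2) * norm v"
  proof (rule schwarz_pick_has_cderiv)
    show "hholo_on g (ball 0 1)"
      unfolding hholo_on_iff_has_cderiv g_def using hol has_cderiv_cinner by blast
    show "g ` ball 0 1 \<subseteq> ball 0 1"
    proof (rule image_subsetI)
      fix z :: 'a assume z: "z \<in> ball 0 1"
      have "cmod (g z) \<le> norm (\<Theta> z)" using norm_cinner_le[of "\<Theta> z" u] nu by (simp add: g_def)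
      then show "g z \<in> ball 0 1" using into[OF z] by simp
    qed
    show "has_cderiv g (\<lambda>h. cinner (L0 h) u) 0"
      unfolding g_def by (rule has_cderiv_cinner[OF L0])
  qed simp
  moreover have "cinner (L0 v) u = of_real (norm (L0 v))"
    using False by (simp add: u_def cinner_scaleC_right cinner_self_norm power2_eq_square)
  ultimately show ?thesis by (simp add: g_def \<Theta>0)
qed

section \<open>Functions of invariant norm at most one are \<open>\<beta>\<close>-Lipschitz\<close>

lemma dnorm_compose_phi_le_1:
  assumes "inv_norm f \<le> 1" "z \<in> ball 0 1"
  shows "dnorm (f \<circ> phi z) 0 \<le> 1"
proof -
  have "ereal (dnorm (f \<circ> phi z) 0) \<le> inv_norm f"
    unfolding inv_norm_def using assms(2) by (rule SUP_upper)
  then have "ereal (dnorm (f \<circ> phi z) 0) \<le> 1" using assms(1) by (rule order_trans)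
  then show ?thesis by (simp add: one_ereal_def)
qed

lemma inv_norm_le_1_cderiv_bound:
  fixes f :: "'a::chilbert \<Rightarrow> complex"
  assumes inv: "inv_norm f \<le> 1" and q: "norm q < 1" and G: "has_cderiv f G q"
  shows "cmod (G (phi_deriv q 0 e)) \<le> norm e"
proof -
  have s: "has_cderiv (f \<circ> phi q) (\<lambda>h. G (phi_deriv q 0 h)) 0"
    using has_cderiv_compose[OF phi_has_cderiv_map[of 0 q]] G by (simp add: phi_zero_right comp_def)
  then have "onorm (\<lambda>h. G (phi_deriv q 0 h)) \<le> 1"
    using dnorm_compose_phi_le_1[OF inv] q dnorm_eq_onorm by fastforce
  then show ?thesis
    using onorm[OF has_cderiv_linear[OF s], of e] mult_right_mono[of _ 1 "norm e"] by fastforce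
qed

lemma norm_phi_deriv_triple_le:
  fixes p x v :: "'a::chilbert"
  assumes p: "norm p < 1" and x: "norm x < 1"
  shows "norm (phi_deriv (phi x p) (phi x p) (phi_deriv x p (phi_deriv p 0 v))) \<le> norm v"
proof -
  define q where "q = phi x p"
  have q: "norm q < 1" using norm_phi_less_1[OF x p] by (simp add: q_def)
  define \<Theta> where "\<Theta> = (\<lambda>z. phi q (phi x (phi p z)))"
  have d\<Theta>: "has_cderiv_map \<Theta> (\<lambda>h. phi_deriv q (phi x (phi p z)) (phi_deriv x (phi p z) (phi_deriv p z h))) z"
    if "z \<in> ball 0 1" for z
  proof -
    have z: "norm z < 1" using that by simp
    have n2: "norm (phi p z) < 1" by (rule norm_phi_less_1[OF p z])
    have n3: "norm (phi x (phi p z)) < 1" by (rule norm_phi_less_1[OF x n2])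
    show ?thesis
      unfolding \<Theta>_def
      by (rule has_cderiv_map_compose[OF has_cderiv_map_compose[OF
            phi_has_cderiv_map_ball[OF p z] phi_has_cderiv_map_ball[OF x n2]]
            phi_has_cderiv_map_ball[OF q n3]])
  qed
  have "norm (phi_deriv q q (phi_deriv x p (phi_deriv p 0 v))) \<le> norm v"
  proof (rule schwarz_has_cderiv_map)
    show "\<exists>L. has_cderiv_map \<Theta> L z" if "z \<in> ball 0 1" for z using d\<Theta>[OF that] by blast
    show "norm (\<Theta> z) < 1" if "z \<in> ball 0 1" for z
      unfolding \<Theta>_def using that p x q by (intro norm_phi_less_1) auto
    show "\<Theta> 0 = 0" by (simp add: \<Theta>_def phi_zero_right q_def[symmetric] phi_self)
    show "has_cderiv_map \<Theta> (\<lambda>h. phi_deriv q q (phi_deriv x p (phi_deriv p 0 h))) 0"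
      using d\<Theta>[of 0] by (simp add: phi_zero_right q_def)
  qed
  then show ?thesis by (simp add: q_def)
qed

text \<open>Along the geodesic \<open>t \<mapsto> phi x (t v)\<close> the derivative of \<open>f\<close> is at most \<open>1 / (1 - t\<^sup>2)\<close>:
  with \<open>p = t v\<close> and \<open>q = phi x p\<close>, the invariant norm bounds \<open>|f'(q)(phi_x'(p) v)|\<close> by \<open>|e|\<close>,
  and the contraction \<open>phi_q'(q) \<circ> phi_x'(p) \<circ> phi_p'(0)\<close> maps \<open>v\<close> to \<open>-(1 - t\<^sup>2) e\<close>.\<close>

lemma inv_norm_le_1_geodesic_cderiv_bound:
  fixes f :: "'a::chilbert \<Rightarrow> complex"
  assumes inv: "inv_norm f \<le> 1" and x: "norm x < 1" and v: "norm v = 1" and t: "\<bar>t\<bar> < 1"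
    and G: "has_cderiv f G (phi x (t *\<^sub>R v))"
  shows "cmod (G (phi_deriv x (t *\<^sub>R v) v)) * (1 - t\<^sup>2) \<le> 1"
proof -
  define p where "p = t *\<^sub>R v"
  define q where "q = phi x p"
  have np: "norm p < 1" using t v by (simp add: p_def)
  have nq: "norm q < 1" using norm_phi_less_1[OF x np] by (simp add: q_def)
  define e where "e = phi_deriv q q (phi_deriv x p v)"
  have Ge: "cmod (G (phi_deriv x p v)) \<le> norm e"
    using inv_norm_le_1_cderiv_bound[OF inv nq, of G e] G phi_deriv_inverse[OF nq]
    by (simp add: e_def q_def p_def)
  have "phi_deriv q q (phi_deriv x p (phi_deriv p 0 v)) = (- (1 - t\<^sup>2)) *\<^sub>R e"
    using has_cderiv_map_linear[OF phi_has_cderiv_map_ball[OF x np]]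
      has_cderiv_map_linear[OF phi_has_cderiv_map_ball[OF nq nq]]
    by (simp add: p_def phi_deriv_radial[OF v] linear_scale e_def)
  moreover have "t\<^sup>2 < 1" using t by (simp add: abs_square_less_1)
  ultimately have "norm e * (1 - t\<^sup>2) \<le> 1"
    using norm_phi_deriv_triple_le[OF np x, of v] v by (simp add: q_def abs_if mult.commute)
  moreover have "cmod (G (phi_deriv x p v)) * (1 - t\<^sup>2) \<le> norm e * (1 - t\<^sup>2)"
    using Ge \<open>t\<^sup>2 < 1\<close> by (intro mult_right_mono) simp_all
  ultimately show ?thesis by (simp add: p_def)
qed

lemma geodesic_has_derivative_onorm_le_1:
  fixes f :: "'a::chilbert \<Rightarrow> complex"
  assumes hol: "hholo_on f (ball 0 1)" and inv: "inv_norm f \<le> 1"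
    and x: "norm x < 1" and v: "norm v = 1"
  shows "\<exists>L. ((\<lambda>\<sigma>. f (phi x (tanh \<sigma> *\<^sub>R v))) has_derivative L) (at \<sigma>) \<and> onorm L \<le> 1"
proof -
  define t where "t = tanh \<sigma>"
  have t: "\<bar>t\<bar> < 1" using tanh_real_bounds[of \<sigma>] by (auto simp: t_def)
  then have D: "1 - t\<^sup>2 > 0" by (simp add: abs_square_less_1)
  define p where "p = t *\<^sub>R v"
  have np: "norm p < 1" using t v by (simp add: p_def)
  have "phi x p \<in> ball 0 1" using norm_phi_less_1[OF x np] by simp
  then obtain G where G: "has_cderiv f G (phi x p)"
    using hol unfolding hholo_on_iff_has_cderiv by blast
  have "((\<lambda>\<sigma>. tanh \<sigma>) has_real_derivative 1 - t\<^sup>2) (at \<sigma>)"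
    unfolding t_def by (auto intro!: derivative_eq_intros)
  then have "((\<lambda>\<sigma>. tanh \<sigma> *\<^sub>R v) has_derivative (\<lambda>h. ((1 - t\<^sup>2) * h) *\<^sub>R v)) (at \<sigma>)"
    using bounded_linear.has_derivative[OF bounded_linear_scaleR_left]
    unfolding has_field_derivative_def by blast
  then have dH: "((\<lambda>\<sigma>. f (phi x (tanh \<sigma> *\<^sub>R v))) has_derivative
      (\<lambda>h. G (phi_deriv x p (((1 - t\<^sup>2) * h) *\<^sub>R v)))) (at \<sigma>)"
    using has_cderiv_compose[OF phi_has_cderiv_map_ball[OF x np] G]
    unfolding has_cderiv_def by (auto simp: p_def t_def intro: has_derivative_compose)
  have lin: "linear (\<lambda>u. G (phi_deriv x p u))"
    using has_cderiv_linear[OF has_cderiv_compose[OF phi_has_cderiv_map_ball[OF x np] G]]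
    by (simp add: bounded_linear.linear)
  have db: "cmod (G (phi_deriv x p v)) * (1 - t\<^sup>2) \<le> 1"
    using inv_norm_le_1_geodesic_cderiv_bound[OF inv x v t] G by (simp add: p_def)
  have "onorm (\<lambda>h. G (phi_deriv x p (((1 - t\<^sup>2) * h) *\<^sub>R v))) \<le> 1"
  proof (rule onorm_bound)
    fix h :: real
    have "norm (G (phi_deriv x p (((1 - t\<^sup>2) * h) *\<^sub>R v)))
        = \<bar>h\<bar> * (cmod (G (phi_deriv x p v)) * (1 - t\<^sup>2))"
      using linear_scale[OF lin] D by (simp add: abs_mult)
    also have "\<dots> \<le> \<bar>h\<bar> * 1" using db by (intro mult_left_mono) simp_all
    finally show "norm (G (phi_deriv x p (((1 - t\<^sup>2) * h) *\<^sub>R v))) \<le> 1 * norm h" by simp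
  qed simp
  then show ?thesis using dH by blast
qed

lemma tanh_artanh_real:
  fixes r :: real
  assumes "-1 < r" "r < 1"
  shows "tanh (artanh r) = r"
proof -
  have "(1 + r) / (1 - r) > 0" using assms by simp
  then have e: "exp (- 2 * artanh r) = (1 - r) / (1 + r)"
    by (simp add: artanh_def exp_minus)
  show ?thesis unfolding tanh_real_altdef e using assms by (simp add: field_simps)
qed

lemma artanh_real_nonneg: "0 \<le> r \<Longrightarrow> r < 1 \<Longrightarrow> artanh (r::real) \<ge> 0"
  by (simp add: artanh_def field_simps)

lemma betaE_eq_artanh: "betaE x y = artanh (norm (phi x y))"
  by (simp add: betaE_def rhoE_def artanh_def)

lemma hholo_on_diff_le_betaE:
  fixes f :: "'a::chilbert \<Rightarrow> complex"
  assumes hol: "hholo_on f (ball 0 1)" and inv: "inv_norm f \<le> 1"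
    and x: "norm x < 1" and y: "norm y < 1"
  shows "cmod (f x - f y) \<le> betaE x y"
proof -
  define \<rho> where "\<rho> = norm (phi x y)"
  have \<rho>: "0 \<le> \<rho>" "\<rho> < 1" using norm_phi_less_1[OF x y] by (simp_all add: \<rho>_def)
  have y_eq: "phi x (phi x y) = y" by (rule phi_involutive[OF x cinner_ne_1_ball[OF y x]])
  show ?thesis
  proof (cases "\<rho> = 0")
    case True
    then show ?thesis using y_eq by (simp add: \<rho>_def phi_zero_right betaE_eq_artanh)
  next
    case False
    define v where "v = (1 / \<rho>) *\<^sub>R phi x y"
    have v: "norm v = 1" using False \<rho> by (simp add: v_def \<rho>_def)
    define H where "H = (\<lambda>\<sigma>. f (phi x (tanh \<sigma> *\<^sub>R v)))"
    obtain L where L: "\<And>\<sigma>. (H has_derivative L \<sigma>) (at \<sigma>)" "\<And>\<sigma>. onorm (L \<sigma>) \<le> 1"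
      using geodesic_has_derivative_onorm_le_1[OF hol inv x v] unfolding H_def by metis
    have "norm (H (artanh \<rho>) - H 0) \<le> 1 * norm (artanh \<rho> - 0)"
      by (rule differentiable_bound[of UNIV H L]) (auto intro: L has_derivative_at_withinI)
    moreover have "tanh (artanh \<rho>) *\<^sub>R v = phi x y"
      using \<rho> False by (simp add: tanh_artanh_real v_def)
    then have "H (artanh \<rho>) = f y" by (simp add: H_def y_eq)
    moreover have "H 0 = f x" by (simp add: H_def phi_zero_right)
    ultimately show ?thesis
      using artanh_real_nonneg[OF \<rho>] by (simp add: betaE_eq_artanh \<rho>_def norm_minus_commute)
  qed
qed

section \<open>The extremal functions \<open>artanh \<circ> h\<close>\<close>

lemma Re_cayley_transform_pos:
  fixes z :: complex
  assumes "cmod z < 1"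
  shows "Re ((1 + z) / (1 - z)) > 0"
proof -
  have "(cmod z)\<^sup>2 < 1" using assms by (simp add: abs_square_less_1)
  then have "(Re z)\<^sup>2 + (Im z)\<^sup>2 < 1" by (simp add: cmod_power2)
  then have "Re (1 + z) * Re (1 - z) + Im (1 + z) * Im (1 - z) > 0"
    by (simp add: power2_eq_square algebra_simps)
  moreover have "(Re (1 - z))\<^sup>2 + (Im (1 - z))\<^sup>2 > 0"
  proof -
    have "Re z < 1" using assms abs_Re_le_cmod[of z] by linarith
    then show ?thesis by (simp add: add_pos_nonneg)
  qed
  ultimately show ?thesis unfolding Re_divide by (rule divide_pos_pos)
qed

lemma artanh_complex_has_field_derivative:
  fixes z :: complex
  assumes z: "cmod z < 1"
  shows "(artanh has_field_derivative 1 / (1 - z\<^sup>2)) (at z)"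
proof -
  have z1: "1 - z \<noteq> 0" and z2: "1 + z \<noteq> 0" using z by (auto simp: add_eq_0_iff)
  have "(1 + z) / (1 - z) \<notin> \<real>\<^sub>\<le>\<^sub>0"
    using Re_cayley_transform_pos[OF z] by (simp add: complex_nonpos_Reals_iff)
  moreover have "((\<lambda>z. (1 + z) / (1 - z)) has_field_derivative (2 / (1 - z)\<^sup>2)) (at z)"
    using z1 by (auto intro!: derivative_eq_intros simp: field_simps power2_eq_square)
  ultimately have "((\<lambda>z. Ln ((1 + z) / (1 - z)) / 2) has_field_derivative
      inverse ((1 + z) / (1 - z)) * (2 / (1 - z)\<^sup>2) / 2) (at z)"
    by (intro DERIV_cdivide DERIV_chain2[OF has_field_derivative_Ln])
  moreover have "inverse ((1 + z) / (1 - z)) * (2 / (1 - z)\<^sup>2) / 2 = 1 / (1 - z\<^sup>2)"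
  proof -
    have "inverse (a / b) * (2 / b\<^sup>2) / 2 = 1 / (a * b)" if "a \<noteq> 0" "b \<noteq> 0" for a b :: complex
      using that by (simp add: field_simps power2_eq_square)
    moreover have "(1 + z) * (1 - z) = 1 - z\<^sup>2" by (simp add: power2_eq_square algebra_simps)
    ultimately show ?thesis using z1 z2 by metis
  qed
  ultimately show ?thesis unfolding artanh_def[abs_def] by simp
qed

lemma artanh_complex_of_real:
  assumes "-1 < r" "r < 1"
  shows "artanh (complex_of_real r) = of_real (artanh r)"
proof -
  have "(1 + complex_of_real r) / (1 - complex_of_real r) = of_real ((1 + r) / (1 - r))" by simp
  moreover have "(1 + r) / (1 - r) > 0" using assms by simp
  ultimately show ?thesis
    unfolding artanh_def by (simp add: Ln_of_real del: of_real_divide) simp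
qed

text \<open>\<open>artanh\<close> is a contraction from the Poincare metric of the disc to the Euclidean metric.\<close>

lemma norm_artanh_deriv_le:
  fixes c :: complex
  assumes "cmod c < 1"
  shows "cmod (1 / (1 - c\<^sup>2)) * (1 - (cmod c)\<^sup>2) \<le> 1"
proof -
  have "(cmod c)\<^sup>2 < 1" using assms by (simp add: abs_square_less_1)
  moreover have "1 - (cmod c)\<^sup>2 \<le> cmod (1 - c\<^sup>2)"
    using norm_triangle_ineq2[of 1 "c\<^sup>2"] by (simp add: norm_power)
  ultimately show ?thesis by (simp add: norm_divide divide_simps)
qed

lemma hholo_on_subset: "hholo_on f U \<Longrightarrow> open V \<Longrightarrow> V \<subseteq> U \<Longrightarrow> hholo_on f V"
  by (auto simp: hholo_on_def)

lemma hholo_on_artanh_compose: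
  fixes h :: "'a::chilbert \<Rightarrow> complex"
  assumes "hholo_on h U" "h ` U \<subseteq> ball 0 1"
  shows "hholo_on (\<lambda>z. artanh (h z)) U"
  using assms has_cderiv_field_compose[OF _ artanh_complex_has_field_derivative]
  unfolding hholo_on_iff_has_cderiv by fastforce

lemma dnorm_artanh_compose_le:
  fixes h :: "'a::chilbert \<Rightarrow> complex"
  assumes r: "r > 0" and hol: "hholo_on h (ball z0 r)" and into: "h ` ball z0 r \<subseteq> ball 0 1"
  shows "dnorm (\<lambda>z. artanh (h z)) z0 \<le> 1 / r"
proof -
  have z0: "z0 \<in> ball z0 r" using r by simp
  then obtain G where G: "has_cderiv h G z0" using hol unfolding hholo_on_iff_has_cderiv by blast
  define c where "c = h z0"
  have "h z0 \<in> ball 0 1" using into z0 by blast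
  then have c: "cmod c < 1" by (simp add: c_def)
  have "onorm (\<lambda>k. 1 / (1 - c\<^sup>2) * G k) \<le> 1 / r"
  proof (rule onorm_bound)
    fix k :: 'a
    have SP: "cmod (G k) * r \<le> (1 - (cmod c)\<^sup>2) * norm k"
      using schwarz_pick_has_cderiv[OF r hol into G] by (simp add: c_def)
    have "cmod (1 / (1 - c\<^sup>2) * G k) = cmod (1 / (1 - c\<^sup>2)) * cmod (G k)"
      by (rule norm_mult)
    also have "\<dots> \<le> cmod (1 / (1 - c\<^sup>2)) * ((1 - (cmod c)\<^sup>2) * norm k / r)"
      using SP r by (intro mult_left_mono) (simp_all add: field_simps)
    also have "\<dots> = cmod (1 / (1 - c\<^sup>2)) * (1 - (cmod c)\<^sup>2) * (norm k / r)" by simp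
    also have "\<dots> \<le> 1 * (norm k / r)"
      using norm_artanh_deriv_le[OF c] r by (intro mult_right_mono) simp_all
    finally show "cmod (1 / (1 - c\<^sup>2) * G k) \<le> 1 / r * norm k" by simp
  qed (use r in simp)
  then show ?thesis
    using dnorm_eq_onorm[OF has_cderiv_field_compose[OF G artanh_complex_has_field_derivative[OF c, unfolded c_def]]]
    by (simp add: c_def)
qed

lemma inv_norm_artanh_compose_le_1:
  fixes h :: "'a::chilbert \<Rightarrow> complex"
  assumes hol: "hholo_on h (ball 0 1)" and into: "h ` ball 0 1 \<subseteq> ball 0 1"
  shows "inv_norm (\<lambda>z. artanh (h z)) \<le> 1"
  unfolding inv_norm_def
proof (rule SUP_least)
  fix a :: 'a assume "a \<in> ball 0 1"
  then have a: "norm a < 1" by simp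
  have "(h \<circ> phi a) ` ball 0 1 \<subseteq> ball 0 1"
    using into norm_phi_less_1[OF a] by (auto simp: image_subset_iff)
  then have "dnorm (\<lambda>z. artanh ((h \<circ> phi a) z)) 0 \<le> 1 / 1"
    by (intro dnorm_artanh_compose_le hholo_on_compose_phi[OF hol a]) auto
  then show "ereal (dnorm ((\<lambda>z. artanh (h z)) \<circ> phi a) 0) \<le> 1"
    by (simp add: comp_def one_ereal_def)
qed

lemma artanh_compose_in_bloch:
  fixes h :: "'a::chilbert \<Rightarrow> complex"
  assumes hol: "hholo_on h (ball 0 1)" and into: "h ` ball 0 1 \<subseteq> ball 0 1"
  shows "(\<lambda>z. artanh (h z)) \<in> bloch"
proof -
  have "(1 - (norm z)\<^sup>2) * dnorm (\<lambda>z. artanh (h z)) z \<le> 2" if "z \<in> ball 0 1" for z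
  proof -
    define r where "r = 1 - norm z"
    have r: "r > 0" "norm z < 1" using that by (simp_all add: r_def)
    have sub: "ball z r \<subseteq> ball 0 1"
    proof
      fix v assume "v \<in> ball z r"
      then have "norm (v - z) < r" by (simp add: dist_norm norm_minus_commute)
      then show "v \<in> ball 0 1" using norm_triangle_ineq[of z "v - z"] by (simp add: r_def)
    qed
    have "dnorm (\<lambda>z. artanh (h z)) z \<le> 1 / r"
      using sub into by (intro dnorm_artanh_compose_le[OF r(1) hholo_on_subset[OF hol]]) auto
    then have "(1 - (norm z)\<^sup>2) * dnorm (\<lambda>z. artanh (h z)) z \<le> (1 - (norm z)\<^sup>2) * (1 / r)"
      using r by (intro mult_left_mono) (simp_all add: abs_square_le_1)
    also have "\<dots> = 1 + norm z" using r by (simp add: r_def field_simps power2_eq_square)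
    finally show ?thesis using r by simp
  qed
  then have "bdd_above ((\<lambda>z. (1 - (norm z)\<^sup>2) * dnorm (\<lambda>z. artanh (h z)) z) ` ball 0 1)"
    unfolding bdd_above_def by (intro exI[of _ 2]) auto
  then show ?thesis using hholo_on_artanh_compose[OF hol into] by (simp add: bloch_def)
qed

lemma betaE_attained:
  fixes x y :: "'a::chilbert"
  assumes x: "norm x < 1" and y: "norm y < 1"
  obtains f where "f \<in> bloch" "inv_norm f \<le> 1" "cmod (f x - f y) = betaE x y"
proof -
  define \<rho> where "\<rho> = norm (phi x y)"
  have \<rho>: "0 \<le> \<rho>" "\<rho> < 1" using norm_phi_less_1[OF x y] by (simp_all add: \<rho>_def)
  define u where "u = (1 / \<rho>) *\<^sub>R phi x y"
  have u: "norm u \<le> 1" using \<rho> by (cases "\<rho> = 0") (simp_all add: u_def \<rho>_def)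
  define h where "h = (\<lambda>z. cinner (phi x z) u)"
  have "has_cderiv h (\<lambda>k. cinner (phi_deriv x z k) u) z" if "z \<in> ball 0 1" for z
    using that unfolding h_def by (intro has_cderiv_cinner phi_has_cderiv_map_ball[OF x]) simp
  then have hol: "hholo_on h (ball 0 1)"
    unfolding hholo_on_iff_has_cderiv using open_ball by blast
  have "cmod (h z) < 1" if "norm z < 1" for z
    using norm_cinner_le[of "phi x z" u] norm_phi_less_1[OF x that] mult_left_le[OF u norm_ge_zero[of "phi x z"]]
    unfolding h_def by linarith
  then have into: "h ` ball 0 1 \<subseteq> ball 0 1" by auto
  have "h y = of_real \<rho>"
    using \<rho> by (cases "\<rho> = 0") (simp_all add: h_def u_def cinner_scaleR_right cinner_self_norm
        \<rho>_def power2_eq_square)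
  then have "artanh (h y) = of_real (artanh \<rho>)" using \<rho> by (simp add: artanh_complex_of_real)
  moreover have "artanh (h x) = 0" by (simp add: h_def phi_self)
  ultimately have "cmod (artanh (h x) - artanh (h y)) = betaE x y"
    using artanh_real_nonneg[OF \<rho>] by (simp add: betaE_eq_artanh \<rho>_def)
  then show ?thesis
    using that artanh_compose_in_bloch[OF hol into] inv_norm_artanh_compose_le_1[OF hol into] by blast
qed

theorem corollary3p5:
  fixes x y :: "'a::chilbert"
  assumes "x \<in> ball 0 1" and "y \<in> ball 0 1"
  shows "betaE x y = Sup {cmod (f x - f y) | f. f \<in> bloch \<and> inv_norm f \<le> 1}"
proof (rule cSup_eq_maximum[symmetric])
  have x: "norm x < 1" and y: "norm y < 1" using assms by auto
  then obtain f where "f \<in> bloch" "inv_norm f \<le> 1" "cmod (f x - f y) = betaE x y"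
    by (rule betaE_attained)
  then show "betaE x y \<in> {cmod (f x - f y) | f. f \<in> bloch \<and> inv_norm f \<le> 1}" by force
  show "s \<le> betaE x y" if "s \<in> {cmod (f x - f y) | f. f \<in> bloch \<and> inv_norm f \<le> 1}" for s
    using that hholo_on_diff_le_betaE[OF _ _ x y] by (auto simp: bloch_def)
qed

end
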